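(* For $w\in S_n$, $$\Delta(\bar\chi^w)=\sum\bar\chi^{\,y_B}\otimes\bar\chi^{\,u_A},$$ the sum over all decompositions $A\sqcup B=\{1,\dots,n\}$ such that $\iota(w)_B$ is an inversion table, where $y_B\in S_{|B|}$ is the permutation with inversion table $\iota(w)_B$ and $u_A\in S_{|A|}$ is the permutation whose dual inversion table is the componentwise minimum $\iota^\vee(w)_A\wedge\iota^\vee(\mathrm{id}_{|A|})$, i.e. writing $A=\{a_1<\dots<a_r\}$, $\iota^\vee_k(u_A)=\min(n-a_k-\iota_{a_k}(w),\,r-k)$ for $1\le k\le r$.
   Context: Let $q$ be a prime power, $\mathfrak{ut}_N$ the additive group of strictly upper triangular $N\times N$ matrices over $\mathbb{F}_q$, $e_{ij}(t)$ the matrix with $t$ at $(i,j)$ and zeros elsewhere. For $w\in S_N$: $\iota_k(w)=\#\{i<w^{-1}(k):w(i)>k\}$ (inversion table) and $\iota^\vee_k(w)=N-k-\iota_k(w)$ (dual inversion table); a sequence $(c_1,\dots,c_\ell)$ is an inversion table iff $0\le c_k\le\ell-k$ for all $k$, and then it determines a unique permutation of $S_\ell$; similarly a dual inversion table. For $B=\{b_1<\dots<b_\ell\}$, $\iota(w)_B=(\iota_{b_1}(w),\dots,\iota_{b_\ell}(w))$. $\mathfrak{ut}_w=\{x:x_{ij}\ne0\Rightarrow0<j-i\le\iota_i(w)\}$; these form a lattice of subgroups whose normal lattice supercharacter theory has supercharacters $\chi^w=\sum_\psi\psi(1)\psi$ over irreducible $\psi$ with $\mathfrak{ut}_w$ the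 largest lattice member in $\ker\psi$; $\mathrm{scf}(\mathfrak{ut}_N)$ is their span. $\bar\chi^w$ is the character of $\mathrm{Ind}_{\mathfrak{ut}_w}^{\mathfrak{ut}_N}(\mathbf 1)$, equal to $\sum_{v:\mathfrak{ut}_v\supseteq\mathfrak{ut}_w}\chi^v$. For $A\subseteq\{1,\dots,N\}$ with $|A|=k$, $m=N-k$: with $c_i=N-\#\{a\in A:a>i\}$ let $U_A=\{(i,j):i\in A,j>c_i\}$, $L_A=\{(i,j):i\in A,j\le c_i\}$, $U_A^\vee=\{(i,j):i\notin A,j\le c_i\}$, $R_A=\{(i,j):i\notin A,j>c_i\}$ (with $i<j$), and $\mathfrak{ut}_A,\mathfrak{l}_A,\mathfrak{ut}_A^\vee,\mathfrak{r}_A$ the subgroups supported on them; identify $\mathfrak{ut}_A^\vee\cong\mathfrak{ut}_m$ via $e_{ij}(t)\mapsto e_{i-s,j-s}(t)$, $s=\#\{a\in A:a<i\}$, and $\mathfrak{ut}_A\cong\mathfrak{ut}_k$ via $e_{ij}(t)\mapsto e_{i-\#\{b<i:b\notin A\},j-m}(t)$. $\mathrm{Dela}_A(\gamma)(u',u)=q^{-|L_A|-|R_A|}\sum_{l\in\mathfrak{l}_A,r\in\mathfrak{r}_A}(\frac{-1}{q-1})^{\#\{(i,j):r_{ij}\ne0\}}\gamma(l+u'+u+r)$, an element of $\mathrm{scf}(\mathfrak{ut}_m)\otimes\mathrm{scf}(\mathfrak{ut}_k)$. The coproduct is $\Delta(\alpha)=\sum_{A\subseteq\{1,\dots,N\}}\mathrm{Dela}_A(\alpha)$.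 *)

theory Defs
  imports Complex_Main "HOL-Combinatorics.Permutations"
begin

text \<open>N x N matrices over a field are functions nat => nat => 'a (1-indexed).\<close>
type_synonym 'a mat = "nat \<Rightarrow> nat \<Rightarrow> 'a"

definition madd :: "('a::plus) mat \<Rightarrow> 'a mat \<Rightarrow> 'a mat" where
  "madd x y = (\<lambda>i j. x i j + y i j)"

definition mneg :: "('a::uminus) mat \<Rightarrow> 'a mat" where
  "mneg x = (\<lambda>i j. - x i j)"

definition supp_mats :: "(nat \<times> nat) set \<Rightarrow> ('a::zero) mat set" where
  "supp_mats S = {x. \<forall>i j. x i j \<noteq> 0 \<longrightarrow> (i, j) \<in> S}"

definition ut :: "nat \<Rightarrow> ('a::zero) mat set" where
  "ut N = supp_mats {(i, j). 1 \<le> i \<and> i < j \<and> j \<le> N}"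

definition inv_tab :: "nat \<Rightarrow> (nat \<Rightarrow> nat) \<Rightarrow> nat \<Rightarrow> nat" where
  "inv_tab N w k = card {i \<in> {1..N}. i < inv w k \<and> w i > k}"

definition dual_inv_tab :: "nat \<Rightarrow> (nat \<Rightarrow> nat) \<Rightarrow> nat \<Rightarrow> nat" where
  "dual_inv_tab N w k = N - k - inv_tab N w k"

definition is_inv_table :: "nat \<Rightarrow> (nat \<Rightarrow> nat) \<Rightarrow> bool" where
  "is_inv_table l c = (\<forall>k\<in>{1..l}. c k \<le> l - k)"

definition perm_of_inv_table :: "nat \<Rightarrow> (nat \<Rightarrow> nat) \<Rightarrow> (nat \<Rightarrow> nat)" where
  "perm_of_inv_table l c = (THE v. v permutes {1..l} \<and> (\<forall>k\<in>{1..l}. inv_tab l v k = c k))"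

definition perm_of_dual_inv_table :: "nat \<Rightarrow> (nat \<Rightarrow> nat) \<Rightarrow> (nat \<Rightarrow> nat)" where
  "perm_of_dual_inv_table l c =
     (THE v. v permutes {1..l} \<and> (\<forall>k\<in>{1..l}. dual_inv_tab l v k = c k))"

text \<open>iota(w)_B : k-th entry is c(b_k), b_1 < ... < b_l the elements of B.\<close>
definition restrict_seq :: "(nat \<Rightarrow> nat) \<Rightarrow> nat set \<Rightarrow> nat \<Rightarrow> nat" where
  "restrict_seq c B = (\<lambda>k. c (sorted_list_of_set B ! (k - 1)))"

definition ut_perm :: "nat \<Rightarrow> (nat \<Rightarrow> nat) \<Rightarrow> ('a::zero) mat set" where
  "ut_perm N w = {x \<in> ut N. \<forall>i j. x i j \<noteq> 0 \<longrightarrow> j - i \<le> inv_tab N w i}"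

text \<open>Character of Ind_H^G(1) via the Frobenius formula (1/|H|) sum_g 1_H(g^{-1} x g).\<close>
definition ind_triv :: "('a::group_add) mat set \<Rightarrow> 'a mat set \<Rightarrow> 'a mat \<Rightarrow> complex" where
  "ind_triv G H x =
     (\<Sum>g\<in>G. if madd (madd (mneg g) x) g \<in> H then 1 else 0) / of_nat (card H)"

definition barchi :: "nat \<Rightarrow> (nat \<Rightarrow> nat) \<Rightarrow> ('a::{finite,field}) mat \<Rightarrow> complex" where
  "barchi N w = ind_triv (ut N) (ut_perm N w)"

definition cA :: "nat \<Rightarrow> nat set \<Rightarrow> nat \<Rightarrow> nat" where
  "cA N A i = N - card {a \<in> A. a > i}"

definition L_pos :: "nat \<Rightarrow> nat set \<Rightarrow> (nat \<times> nat) set" where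
  "L_pos N A = {(i, j). i \<in> A \<and> i < j \<and> j \<le> cA N A i}"

definition R_pos :: "nat \<Rightarrow> nat set \<Rightarrow> (nat \<times> nat) set" where
  "R_pos N A = {(i, j). i \<in> {1..N} - A \<and> i < j \<and> cA N A i < j \<and> j \<le> N}"

text \<open>Inverse of the identification ut_A^dual = ut_m, e_ij(t) -> e_{i-s,j-s}(t).\<close>
definition embed_dual :: "nat \<Rightarrow> nat set \<Rightarrow> ('a::zero) mat \<Rightarrow> 'a mat" where
  "embed_dual N A u' = (\<lambda>i j.
     if i \<in> {1..N} - A \<and> i < j \<and> j \<le> cA N A i
     then u' (i - card {a \<in> A. a < i}) (j - card {a \<in> A. a < i}) else 0)"

text \<open>Inverse of the identification ut_A = ut_k, e_ij(t) -> e_{i - #{b<i, b notin A}, j-m}(t).\<close>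
definition embed_A :: "nat \<Rightarrow> nat set \<Rightarrow> ('a::zero) mat \<Rightarrow> 'a mat" where
  "embed_A N A u = (\<lambda>i j.
     if i \<in> A \<and> i < j \<and> cA N A i < j \<and> j \<le> N
     then u (i - card {b \<in> {1..N} - A. b < i}) (j - (N - card A)) else 0)"

definition Dela :: "nat \<Rightarrow> nat set \<Rightarrow> (('a::{finite,field}) mat \<Rightarrow> complex)
                     \<Rightarrow> 'a mat \<times> 'a mat \<Rightarrow> complex" where
  "Dela N A \<gamma> = (\<lambda>(u', u).
     (1 / of_nat (card (UNIV :: 'a set)) ^ (card (L_pos N A) + card (R_pos N A))) *
     (\<Sum>l\<in>(supp_mats (L_pos N A) :: 'a mat set). \<Sum>r\<in>(supp_mats (R_pos N A) :: 'a mat set).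
        (- 1 / (of_nat (card (UNIV :: 'a set)) - 1)) ^ card {(i, j) \<in> R_pos N A. r i j \<noteq> 0} *
        \<gamma> (madd (madd (madd l (embed_dual N A u')) (embed_A N A u)) r)))"

text \<open>Coproduct, as an element of the graded sum of scf(ut_{N-k}) (x) scf(ut_k):
  the k-th component (a function on ut_{N-k} x ut_k) collects the A with |A| = k.\<close>
definition coproduct :: "nat \<Rightarrow> (('a::{finite,field}) mat \<Rightarrow> complex)
                          \<Rightarrow> nat \<Rightarrow> 'a mat \<times> 'a mat \<Rightarrow> complex" where
  "coproduct N \<alpha> k = (\<lambda>p. \<Sum>A\<in>{A. A \<subseteq> {1..N} \<and> card A = k}. Dela N A \<alpha> p)"

end

theory Submission
  imports Defs
begin

(* Since ut_n is abelian, barchi n w is a constant multiple of the indicator of the pattern group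
   supported on H_w = {(i, j). 0 < j - i <= iota_i(w)}.  The positions of ut_n split into
   the blocks L_A, U_A^dual, U_A, R_A, and Dela_A of an indicator factorises over them: the sum over
   l counts q^|L_A /\ H_w|, and the signed sum over r is (1 + (q - 1) c)^|R_A /\ H_w|, which for
   c = -1/(q - 1) vanishes unless R_A /\ H_w is empty, i.e. unless iota(w)_B is an inversion table.
   In that case the identifications U_A^dual = ut_m and U_A = ut_k carry H_w onto the patterns of
   y_B and u_A, row by row, and the powers of q match by counting positions block by block. *)

lemma sorted_list_of_set_nth_mem:
  "finite S \<Longrightarrow> k < card S \<Longrightarrow> sorted_list_of_set S ! k \<in> S"
  by (metis length_sorted_list_of_set nth_mem set_sorted_list_of_set)

definition rank :: "nat set \<Rightarrow> nat \<Rightarrow> nat" where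
  "rank S i = card {s \<in> S. s < i}"

lemma rank_sorted_list_of_set_nth:
  assumes "finite S" "k < card S"
  shows "rank S (sorted_list_of_set S ! k) = k"
proof -
  let ?xs = "sorted_list_of_set S"
  have sorted: "sorted_wrt (<) ?xs" and len: "length ?xs = card S" and set: "set ?xs = S"
    using assms(1) by simp_all
  have "{s \<in> S. s < ?xs ! k} = (!) ?xs ` {..<k}"
  proof (intro equalityI subsetI)
    fix s assume "s \<in> {s \<in> S. s < ?xs ! k}"
    then have "s \<in> set ?xs" "s < ?xs ! k" using set by auto
    then obtain t where t: "t < length ?xs" "?xs ! t = s" "s < ?xs ! k"
      by (auto simp: in_set_conv_nth)
    have "t < k"
    proof (rule ccontr)
      assume "\<not> t < k"
      then have "?xs ! k \<le> ?xs ! t"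
        using t(1) by (simp add: sorted_nth_mono)
      with t(2,3) show False by simp
    qed
    with t show "s \<in> (!) ?xs ` {..<k}" by auto
  next
    fix s assume "s \<in> (!) ?xs ` {..<k}"
    then obtain t where t: "t < k" "s = ?xs ! t" by auto
    then have "?xs ! t < ?xs ! k"
      using sorted assms(2) len by (simp add: sorted_wrt_nth_less)
    moreover have "?xs ! t \<in> S"
      using sorted_list_of_set_nth_mem[OF assms(1)] t(1) assms(2) by simp
    ultimately show "s \<in> {s \<in> S. s < ?xs ! k}" using t by simp
  qed
  moreover have "inj_on ((!) ?xs) {..<k}"
    using assms len by (auto simp: inj_on_def nth_eq_iff_index_eq)
  ultimately show ?thesis by (simp add: rank_def card_image)
qed

lemma
  assumes "finite S" "i \<in> S"
  shows rank_less_card: "rank S i < card S"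
    and sorted_list_of_set_nth_rank: "sorted_list_of_set S ! rank S i = i"
proof -
  obtain t where "t < card S" "sorted_list_of_set S ! t = i"
    using assms by (metis in_set_conv_nth length_sorted_list_of_set set_sorted_list_of_set)
  with assms rank_sorted_list_of_set_nth show "rank S i < card S" "sorted_list_of_set S ! rank S i = i"
    by metis+
qed

lemma rank_Suc: "finite S \<Longrightarrow> rank S (Suc i) = rank S i + (if i \<in> S then 1 else 0)"
proof -
  assume "finite S"
  have "{s \<in> S. s < Suc i} = {s \<in> S. s < i} \<union> (S \<inter> {i})" by auto
  with \<open>finite S\<close> show ?thesis by (simp add: rank_def card_Un_disjoint)
qed

lemma rank_le_card: "finite S \<Longrightarrow> rank S i \<le> card S"
  unfolding rank_def by (intro card_mono) auto

lemma is_inv_table_restrict_seq_iff: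
  assumes "finite B"
  shows "is_inv_table (card B) (restrict_seq c B) \<longleftrightarrow> (\<forall>i\<in>B. c i + rank B i < card B)"
proof
  assume tab: "is_inv_table (card B) (restrict_seq c B)"
  show "\<forall>i\<in>B. c i + rank B i < card B"
  proof
    fix i assume i: "i \<in> B"
    then have "rank B i + 1 \<in> {1..card B}"
      using rank_less_card[OF assms i] by simp
    with tab have "restrict_seq c B (rank B i + 1) \<le> card B - (rank B i + 1)"
      unfolding is_inv_table_def by blast
    then show "c i + rank B i < card B"
      using sorted_list_of_set_nth_rank[OF assms i] rank_less_card[OF assms i]
      by (simp add: restrict_seq_def)
  qed
next
  assume bound: "\<forall>i\<in>B. c i + rank B i < card B"
  show "is_inv_table (card B) (restrict_seq c B)" unfolding is_inv_table_def
  proof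
    fix k assume k: "k \<in> {1..card B}"
    define i where "i = sorted_list_of_set B ! (k - 1)"
    have "i \<in> B" "rank B i = k - 1"
      using k assms rank_sorted_list_of_set_nth[OF assms, of "k - 1"] unfolding i_def
      by (auto simp: sorted_list_of_set_nth_mem)
    with bound k show "restrict_seq c B k \<le> card B - k"
      by (auto simp: restrict_seq_def i_def)
  qed
qed

lemma permutes_in_interval:
  assumes "w permutes {1..N}" "1 \<le> x" "x \<le> N"
  shows "1 \<le> w x \<and> w x \<le> N"
  using permutes_in_image[OF assms(1), of x] assms(2,3) by auto

lemma inv_tab_le:
  assumes "w permutes {1..N}"
  shows "inv_tab N w k \<le> N - k"
proof -
  let ?S = "{i \<in> {1..N}. i < inv w k \<and> w i > k}"
  have "w ` ?S \<subseteq> {k<..N}"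
    using permutes_in_interval[OF assms] by auto
  then have "card (w ` ?S) \<le> card {k<..N}"
    by (rule card_mono[OF finite_greaterThanAtMost])
  moreover have "inj_on w ?S"
    using permutes_inj[OF assms] by (auto simp: inj_on_def inj_def)
  ultimately show ?thesis by (simp add: inv_tab_def card_image)
qed

lemma inv_tab_conv_positions:
  assumes "v permutes {1..l}"
  shows "inv_tab l v k = card {b \<in> {1..l}. k < b \<and> inv v b < inv v k}"
proof -
  let ?G = "{b \<in> {1..l}. k < b \<and> inv v b < inv v k}"
  have pi: "inv v permutes {1..l}" using assms by (rule permutes_inv)
  have "{i \<in> {1..l}. i < inv v k \<and> v i > k} = inv v ` ?G"
  proof (intro equalityI subsetI)
    fix i assume "i \<in> {i \<in> {1..l}. i < inv v k \<and> v i > k}"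
    then have i: "i \<in> {1..l}" "i < inv v k" "v i > k" by auto
    have "v i \<in> {1..l}" using i(1) permutes_in_image[OF assms] by blast
    moreover have "inv v (v i) = i" using assms by (simp add: permutes_inverses)
    ultimately show "i \<in> inv v ` ?G"
      using i by (intro image_eqI[of _ _ "v i"]) auto
  next
    fix i assume "i \<in> inv v ` ?G"
    then show "i \<in> {i \<in> {1..l}. i < inv v k \<and> v i > k}"
      using assms pi permutes_in_interval[OF assms] permutes_in_interval[OF pi]
      by (auto simp: permutes_inverses)
  qed
  moreover have "inj_on (inv v) ?G"
    using permutes_inj[OF pi] by (auto simp: inj_on_def inj_def)
  ultimately show ?thesis by (simp add: inv_tab_def card_image)
qed

lemma permutes_eq_Suc_card_less:
  assumes "p permutes {1..l}" "a \<in> {1..l}"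
  shows "p a = Suc (card {b \<in> {1..l}. p b < p a})"
proof -
  have pa: "p a \<in> {1..l}" using assms permutes_in_image[OF assms(1)] by blast
  have "p ` {b \<in> {1..l}. p b < p a} = {1..<p a}"
  proof (intro equalityI subsetI)
    fix x assume "x \<in> p ` {b \<in> {1..l}. p b < p a}"
    then show "x \<in> {1..<p a}" using permutes_in_interval[OF assms(1)] by auto
  next
    fix x assume x: "x \<in> {1..<p a}"
    then have "inv p x \<in> {1..l}"
      using pa permutes_in_image[OF permutes_inv[OF assms(1)]] by auto
    then show "x \<in> p ` {b \<in> {1..l}. p b < p a}" using x assms
      by (auto simp: permutes_inverses intro!: image_eqI[of _ _ "inv p x"])
  qed
  moreover have "inj_on p {b \<in> {1..l}. p b < p a}"
    using permutes_inj[OF assms(1)] by (auto simp: inj_on_def inj_def)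
  ultimately have "card {b \<in> {1..l}. p b < p a} = p a - 1"
    by (metis card_atLeastLessThan card_image)
  then show ?thesis using pa by simp
qed

lemma lower_cut_eq:
  fixes f g :: "'a \<Rightarrow> 'b::linorder"
  assumes "finite X"
    and agree: "\<And>a b. a \<in> X \<Longrightarrow> b \<in> X \<Longrightarrow> f a < f b \<longleftrightarrow> g a < g b"
    and "f0 \<notin> f ` X" "g0 \<notin> g ` X"
    and card_eq: "card {x \<in> X. f x < f0} = card {x \<in> X. g x < g0}"
  shows "{x \<in> X. f x < f0} = {x \<in> X. g x < g0}"
proof -
  let ?G = "{x \<in> X. f x < f0}" and ?G' = "{x \<in> X. g x < g0}"
  have nested: "?G \<subseteq> ?G' \<or> ?G' \<subseteq> ?G"
  proof (rule ccontr)
    assume "\<not> (?G \<subseteq> ?G' \<or> ?G' \<subseteq> ?G)"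
    then obtain b c where b: "b \<in> X" "f b < f0" "\<not> g b < g0"
      and c: "c \<in> X" "g c < g0" "\<not> f c < f0"
      by auto
    have "f c \<noteq> f0" "g b \<noteq> g0"
      using assms(3,4) b(1) c(1) by auto
    with b c have "f b < f c" "g c < g b" by auto
    with agree[OF b(1) c(1)] show False by simp
  qed
  have "finite ?G" "finite ?G'" using \<open>finite X\<close> by simp_all
  with nested card_eq show ?thesis
    using card_subset_eq[of ?G' ?G] card_subset_eq[of ?G ?G'] by argo
qed

(* Downward induction on k: v and v' place k, ..., l in the same relative order, because the place
   of k among k + 1, ..., l is the cut of size inv_tab l v k (lower_cut_eq). *)
lemma inv_tab_inj:
  assumes v: "v permutes {1..l}" and v': "v' permutes {1..l}"
    and tab_eq: "\<And>k. k \<in> {1..l} \<Longrightarrow> inv_tab l v k = inv_tab l v' k"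
  shows "v = v'"
proof -
  define p where "p = inv v"
  define p' where "p' = inv v'"
  have p: "p permutes {1..l}" and p': "p' permutes {1..l}"
    using v v' by (simp_all add: p_def p'_def permutes_inv)
  have inj: "p a = p b \<longleftrightarrow> a = b" "p' a = p' b \<longleftrightarrow> a = b" for a b
    using permutes_inj[OF p] permutes_inj[OF p'] by (auto dest: injD)
  define agree where
    "agree k \<longleftrightarrow> (\<forall>a\<in>{k..l}. \<forall>b\<in>{k..l}. p a < p b \<longleftrightarrow> p' a < p' b)" for k
  have agree_step: "agree k" if k: "1 \<le> k" "k < l + 1" and IH: "agree (Suc k)" for k
  proof -
    have "{b \<in> {Suc k..l}. p b < p k} = {b \<in> {Suc k..l}. p' b < p' k}"
    proof (rule lower_cut_eq)
      show "p a < p b \<longleftrightarrow> p' a < p' b" if "a \<in> {Suc k..l}" "b \<in> {Suc k..l}" for a b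
        using IH that by (simp add: agree_def)
      have "{b \<in> {Suc k..l}. p b < p k} = {b \<in> {1..l}. k < b \<and> p b < p k}"
        "{b \<in> {Suc k..l}. p' b < p' k} = {b \<in> {1..l}. k < b \<and> p' b < p' k}"
        using k by auto
      then show "card {b \<in> {Suc k..l}. p b < p k} = card {b \<in> {Suc k..l}. p' b < p' k}"
        using tab_eq[of k] k inv_tab_conv_positions[OF v, of k] inv_tab_conv_positions[OF v', of k]
        by (simp add: p_def p'_def)
    qed (use inj in auto)
    then have below: "p b < p k \<longleftrightarrow> p' b < p' k" if "b \<in> {Suc k..l}" for b
      using that by blast
    have above: "p k < p b \<longleftrightarrow> p' k < p' b" if "b \<in> {Suc k..l}" for b
    proof -
      have "p b \<noteq> p k" "p' b \<noteq> p' k" using inj that by auto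
      then show ?thesis using below[OF that] by (metis linorder_neqE_nat order.asym)
    qed
    show "agree k" unfolding agree_def
    proof (intro ballI)
      fix a b assume "a \<in> {k..l}" "b \<in> {k..l}"
      then have "a = k \<or> a \<in> {Suc k..l}" "b = k \<or> b \<in> {Suc k..l}" by auto
      then show "p a < p b \<longleftrightarrow> p' a < p' b"
        using IH below above unfolding agree_def by auto
    qed
  qed
  have "agree 1"
  proof (rule inc_induct[of 1 "l + 1"])
    show "agree (l + 1)" by (simp add: agree_def)
  qed (simp_all add: agree_step)
  have "p a = p' a" for a
  proof (cases "a \<in> {1..l}")
    case True
    with \<open>agree 1\<close> have "{b \<in> {1..l}. p b < p a} = {b \<in> {1..l}. p' b < p' a}"
      by (auto simp: agree_def)
    then show ?thesis
      using permutes_eq_Suc_card_less[OF p True] permutes_eq_Suc_card_less[OF p' True] by simp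
  next
    case False
    then show ?thesis using p p' by (simp add: permutes_not_in)
  qed
  then have "inv v = inv v'" by (auto simp: p_def p'_def)
  then show "v = v'" by (metis permutes_inv_inv v v')
qed

lemma prod_Suc_diff_eq_fact: "(\<Prod>k\<in>{1..l}. Suc (l - k)) = fact l"
proof -
  have "(\<Prod>k\<in>{1..l}. Suc (l - k)) = (\<Prod>i = 0..<l. l - i)"
    by (rule prod.reindex_bij_witness[of _ Suc "\<lambda>k. k - 1"]) auto
  then show ?thesis by (simp add: fact_prod_rev)
qed

lemma ex_perm_with_inv_tab:
  assumes "is_inv_table l c"
  shows "\<exists>v. v permutes {1..l} \<and> (\<forall>k\<in>{1..l}. inv_tab l v k = c k)"
proof -
  define perms where "perms = {v. v permutes {1..l}}"
  define tables where "tables = (\<Pi>\<^sub>E k\<in>{1..l}. {0..l - k})"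
  define tab where "tab v = restrict (inv_tab l v) {1..l}" for v
  have sub: "tab ` perms \<subseteq> tables"
    unfolding perms_def tables_def tab_def using inv_tab_le by auto
  have "inj_on tab perms"
  proof (rule inj_onI)
    fix v v' assume "v \<in> perms" "v' \<in> perms" "tab v = tab v'"
    then show "v = v'"
      using inv_tab_inj[of v l v'] unfolding perms_def tab_def by (metis mem_Collect_eq restrict_apply')
  qed
  then have "card (tab ` perms) = fact l"
    by (simp add: card_image perms_def card_permutations)
  also have "\<dots> = (\<Prod>k\<in>{1..l}. Suc (l - k))"
    by (rule prod_Suc_diff_eq_fact[symmetric])
  also have "\<dots> = card tables"
    by (simp add: tables_def card_PiE)
  finally have "tab ` perms = tables"
    using card_subset_eq[OF _ sub] by (simp add: tables_def finite_PiE)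
  moreover have "restrict c {1..l} \<in> tables"
    using assms unfolding tables_def is_inv_table_def by auto
  ultimately obtain v where "v \<in> perms" "tab v = restrict c {1..l}" by (metis imageE)
  then show ?thesis
    unfolding perms_def tab_def by (metis mem_Collect_eq restrict_apply')
qed

lemma perm_of_inv_table:
  assumes "is_inv_table l c"
  shows "perm_of_inv_table l c permutes {1..l}"
    and "k \<in> {1..l} \<Longrightarrow> inv_tab l (perm_of_inv_table l c) k = c k"
proof -
  obtain v where v: "v permutes {1..l}" "\<forall>k\<in>{1..l}. inv_tab l v k = c k"
    using ex_perm_with_inv_tab[OF assms] by blast
  have "perm_of_inv_table l c = v"
    unfolding perm_of_inv_table_def
  proof (rule the_equality)
    fix v' assume v': "v' permutes {1..l} \<and> (\<forall>k\<in>{1..l}. inv_tab l v' k = c k)"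
    show "v' = v"
      by (rule inv_tab_inj[OF conjunct1[OF v'] v(1)]) (use v v' in simp)
  qed (use v in simp)
  with v show "perm_of_inv_table l c permutes {1..l}"
    and "k \<in> {1..l} \<Longrightarrow> inv_tab l (perm_of_inv_table l c) k = c k" by simp_all
qed

lemma perm_of_dual_inv_table:
  assumes "\<And>k. k \<in> {1..l} \<Longrightarrow> c k \<le> l - k"
  shows "perm_of_dual_inv_table l c permutes {1..l}"
    and "k \<in> {1..l} \<Longrightarrow> inv_tab l (perm_of_dual_inv_table l c) k = l - k - c k"
proof -
  have "is_inv_table l (\<lambda>k. l - k - c k)" by (simp add: is_inv_table_def diff_le_mono2)
  then obtain v where v: "v permutes {1..l}" "\<forall>k\<in>{1..l}. inv_tab l v k = l - k - c k"
    using ex_perm_with_inv_tab by blast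
  have dual_iff: "dual_inv_tab l v' k = c k \<longleftrightarrow> inv_tab l v' k = l - k - c k"
    if "v' permutes {1..l}" "k \<in> {1..l}" for v' k
    using inv_tab_le[OF that(1), of k] assms[OF that(2)] by (auto simp: dual_inv_tab_def)
  have "perm_of_dual_inv_table l c = v"
    unfolding perm_of_dual_inv_table_def
  proof (rule the_equality)
    fix v' assume v': "v' permutes {1..l} \<and> (\<forall>k\<in>{1..l}. dual_inv_tab l v' k = c k)"
    show "v' = v"
      by (rule inv_tab_inj[OF conjunct1[OF v'] v(1)]) (use v v' dual_iff[OF conjunct1[OF v']] in auto)
  qed (use v dual_iff in simp)
  with v show "perm_of_dual_inv_table l c permutes {1..l}"
    and "k \<in> {1..l} \<Longrightarrow> inv_tab l (perm_of_dual_inv_table l c) k = l - k - c k" by simp_all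
qed

lemma bij_betw_supp_mats_PiE:
  "bij_betw (\<lambda>x. \<lambda>p\<in>S. case_prod x p) (supp_mats S :: ('a::zero) mat set) (S \<rightarrow>\<^sub>E UNIV)"
proof (rule bij_betwI')
  fix x y :: "'a mat" assume x: "x \<in> supp_mats S" and y: "y \<in> supp_mats S"
  have outside: "x i j = 0" "y i j = 0" if "(i, j) \<notin> S" for i j
    using x y that unfolding supp_mats_def by blast+
  have "x i j = y i j" if eq: "(\<lambda>p\<in>S. case_prod x p) = (\<lambda>p\<in>S. case_prod y p)" for i j
    using fun_cong[OF eq, of "(i, j)"] outside[of i j] by (cases "(i, j) \<in> S") auto
  then show "((\<lambda>p\<in>S. case_prod x p) = (\<lambda>p\<in>S. case_prod y p)) = (x = y)"
    by auto
next
  fix g :: "nat \<times> nat \<Rightarrow> 'a" assume g: "g \<in> S \<rightarrow>\<^sub>E UNIV"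
  define x where "x = (\<lambda>i j. if (i, j) \<in> S then g (i, j) else 0)"
  have "x \<in> supp_mats S" by (auto simp: x_def supp_mats_def)
  moreover have "g = (\<lambda>p\<in>S. case_prod x p)"
    using g by (auto simp: x_def fun_eq_iff PiE_def extensional_def)
  ultimately show "\<exists>x\<in>supp_mats S. g = (\<lambda>p\<in>S. case_prod x p)" by blast
qed simp

lemma
  assumes "finite S"
  shows finite_supp_mats: "finite (supp_mats S :: ('a::{finite,zero}) mat set)"
    and card_supp_mats: "card (supp_mats S :: 'a mat set) = card (UNIV :: 'a set) ^ card S"
proof -
  have bij: "bij_betw (\<lambda>x. \<lambda>p\<in>S. case_prod x p) (supp_mats S :: 'a mat set) (S \<rightarrow>\<^sub>E UNIV)"
    by (rule bij_betw_supp_mats_PiE)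
  show "finite (supp_mats S :: 'a mat set)"
    using bij_betw_finite[OF bij] assms by (simp add: finite_PiE)
  show "card (supp_mats S :: 'a mat set) = card (UNIV :: 'a set) ^ card S"
    using bij_betw_same_card[OF bij] assms by (simp add: card_PiE)
qed

lemma sum_supp_mats_prod:
  fixes f :: "'a::{finite,zero} \<Rightarrow> 'c::comm_semiring_1"
  assumes "finite S"
  shows "(\<Sum>x\<in>supp_mats S. \<Prod>p\<in>S. f (case_prod x p)) = (\<Sum>t\<in>UNIV. f t) ^ card S"
proof -
  have "(\<Sum>x\<in>supp_mats S. \<Prod>p\<in>S. f (case_prod x p)) =
        (\<Sum>x\<in>supp_mats S. \<Prod>p\<in>S. f ((\<lambda>p\<in>S. case_prod x p) p))"
    by simp
  also have "\<dots> = (\<Sum>g\<in>S \<rightarrow>\<^sub>E UNIV. \<Prod>p\<in>S. f (g p))"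
    by (rule sum.reindex_bij_betw[OF bij_betw_supp_mats_PiE])
  also have "\<dots> = (\<Prod>p\<in>S. \<Sum>t\<in>UNIV. f t)"
    using prod_sum_PiE[OF assms, of "\<lambda>_. UNIV" "\<lambda>_. f"] by simp
  finally show ?thesis by simp
qed

lemma sum_supp_mats_power_card_nonzero:
  fixes c :: "'c::comm_ring_1"
  assumes "finite S"
  shows "(\<Sum>x\<in>(supp_mats S :: ('a::{finite,zero}) mat set). c ^ card {(i, j) \<in> S. x i j \<noteq> 0}) =
         (1 + of_nat (card (UNIV :: 'a set) - 1) * c) ^ card S"
proof -
  have "c ^ card {(i, j) \<in> S. x i j \<noteq> 0} = (\<Prod>p\<in>S. if case_prod x p \<noteq> 0 then c else 1)"
    for x :: "'a mat"
    using prod.inter_filter[OF assms, of "\<lambda>_. c" "\<lambda>p. case_prod x p \<noteq> 0"]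
    by (simp add: case_prod_unfold)
  then have "(\<Sum>x\<in>(supp_mats S :: 'a mat set). c ^ card {(i, j) \<in> S. x i j \<noteq> 0}) =
      (\<Sum>t\<in>UNIV. if t \<noteq> (0::'a) then c else 1) ^ card S"
    using sum_supp_mats_prod[OF assms, where 'a = 'a, of "\<lambda>t. if t \<noteq> 0 then c else 1"] by simp
  also have "(\<Sum>t\<in>UNIV. if t \<noteq> (0::'a) then c else 1) = 1 + of_nat (card (UNIV :: 'a set) - 1) * c"
    by (simp add: sum.remove[of UNIV 0] card_Diff_singleton)
  finally show ?thesis .
qed

definition ut_pos :: "nat \<Rightarrow> (nat \<times> nat) set" where
  "ut_pos N = {(i, j). 1 \<le> i \<and> i < j \<and> j \<le> N}"

definition ut_perm_pos :: "nat \<Rightarrow> (nat \<Rightarrow> nat) \<Rightarrow> (nat \<times> nat) set" where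
  "ut_perm_pos N w = {(i, j) \<in> ut_pos N. j - i \<le> inv_tab N w i}"

lemma finite_ut_pos: "finite (ut_pos N)"
  by (rule finite_subset[of _ "{1..N} \<times> {1..N}"]) (auto simp: ut_pos_def)

lemma ut_perm_pos_subset: "ut_perm_pos N w \<subseteq> ut_pos N"
  by (auto simp: ut_perm_pos_def)

lemma finite_ut_perm_pos: "finite (ut_perm_pos N w)"
  using finite_subset[OF ut_perm_pos_subset finite_ut_pos] .

lemma ut_eq_supp_mats: "ut N = supp_mats (ut_pos N)"
  by (simp add: ut_def ut_pos_def)

lemma ut_perm_eq_supp_mats: "ut_perm N w = supp_mats (ut_perm_pos N w)"
  by (auto simp: ut_perm_def ut_def supp_mats_def ut_perm_pos_def ut_pos_def)

lemma barchi_eq: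
  "barchi N w (x :: ('a::{finite,field}) mat) =
    (if x \<in> supp_mats (ut_perm_pos N w)
     then of_nat (card (UNIV :: 'a set)) ^ card (ut_pos N) / of_nat (card (UNIV :: 'a set)) ^ card (ut_perm_pos N w)
     else 0)"
proof -
  have "madd (madd (mneg g) x) g = x" for g :: "'a mat"
    by (simp add: madd_def mneg_def)
  then show ?thesis
    by (simp add: barchi_def ind_triv_def ut_eq_supp_mats ut_perm_eq_supp_mats
        card_supp_mats finite_ut_pos finite_ut_perm_pos)
qed

lemma madd_in_supp_mats_Un:
  fixes x y :: "('a::monoid_add) mat"
  assumes "x \<in> supp_mats S" "y \<in> supp_mats T"
  shows "madd x y \<in> supp_mats (S \<union> T)"
proof -
  have "x i j \<noteq> 0 \<or> y i j \<noteq> 0" if "x i j + y i j \<noteq> 0" for i j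
    using that by auto
  with assms show ?thesis by (fastforce simp: supp_mats_def madd_def)
qed

lemma madd_in_supp_mats_iff:
  fixes x y :: "('a::comm_monoid_add) mat"
  assumes "x \<in> supp_mats S" "y \<in> supp_mats T" "S \<inter> T = {}"
  shows "madd x y \<in> supp_mats H \<longleftrightarrow> x \<in> supp_mats H \<and> y \<in> supp_mats H"
proof -
  have zero: "x i j = 0 \<or> y i j = 0" for i j
    using assms unfolding supp_mats_def by blast
  have "madd x y i j \<noteq> 0 \<longleftrightarrow> x i j \<noteq> 0 \<or> y i j \<noteq> 0" for i j
    using zero[of i j] by (auto simp: madd_def)
  then show ?thesis by (auto simp: supp_mats_def)
qed

lemma sum_supp_mats_Int:
  fixes g :: "('a::{finite,zero}) mat \<Rightarrow> 'c::comm_monoid_add"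
  assumes "finite S"
  shows "(\<Sum>x\<in>supp_mats S. if x \<in> supp_mats H then g x else 0) = (\<Sum>x\<in>supp_mats (S \<inter> H). g x)"
proof -
  have "supp_mats S \<inter> supp_mats H = (supp_mats (S \<inter> H) :: 'a mat set)"
    by (auto simp: supp_mats_def)
  then show ?thesis
    using sum.inter_restrict[OF finite_supp_mats[OF assms], of g "supp_mats H"] by simp
qed

lemma sum_sum_indicator_madd:
  fixes e f :: "('a::{finite,comm_monoid_add}) mat" and c :: "'c::comm_ring_1"
  assumes "finite L" "finite R" and e: "e \<in> supp_mats D" and f: "f \<in> supp_mats U"
    and disj: "L \<inter> D = {}" "(L \<union> D) \<inter> U = {}" "(L \<union> D \<union> U) \<inter> R = {}"
  shows "(\<Sum>l\<in>supp_mats L. \<Sum>r\<in>supp_mats R. c ^ card {(i, j) \<in> R. r i j \<noteq> 0} *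
            (if madd (madd (madd l e) f) r \<in> supp_mats H then 1 else 0)) =
         (if e \<in> supp_mats H \<and> f \<in> supp_mats H
          then of_nat (card (UNIV :: 'a set)) ^ card (L \<inter> H) *
               (1 + of_nat (card (UNIV :: 'a set) - 1) * c) ^ card (R \<inter> H)
          else 0)"
proof -
  have split: "madd (madd (madd l e) f) r \<in> supp_mats H \<longleftrightarrow>
      (e \<in> supp_mats H \<and> f \<in> supp_mats H) \<and> l \<in> supp_mats H \<and> r \<in> supp_mats H"
    if l: "l \<in> supp_mats L" and r: "r \<in> supp_mats R" for l r
  proof -
    have le: "madd l e \<in> supp_mats (L \<union> D)"
      using l e by (rule madd_in_supp_mats_Un)
    then have lef: "madd (madd l e) f \<in> supp_mats (L \<union> D \<union> U)"
      using f by (rule madd_in_supp_mats_Un)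
    show ?thesis
      using madd_in_supp_mats_iff[OF lef r disj(3)] madd_in_supp_mats_iff[OF le f disj(2)]
        madd_in_supp_mats_iff[OF l e disj(1)] by blast
  qed
  have count_eq: "card {(i, j) \<in> R. r i j \<noteq> 0} = card {(i, j) \<in> R \<inter> H. r i j \<noteq> 0}"
    if "r \<in> supp_mats (R \<inter> H)" for r :: "'a mat"
    using that by (auto simp: supp_mats_def intro!: arg_cong[where f = card])
  let ?SL = "supp_mats L :: 'a mat set" and ?SR = "supp_mats R :: 'a mat set"
  have "(\<Sum>l\<in>?SL. \<Sum>r\<in>?SR. c ^ card {(i, j) \<in> R. r i j \<noteq> 0} *
            (if madd (madd (madd l e) f) r \<in> supp_mats H then 1 else 0)) =
        (\<Sum>l\<in>?SL. \<Sum>r\<in>?SR.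
            (if e \<in> supp_mats H \<and> f \<in> supp_mats H then 1 else 0) *
            ((if l \<in> supp_mats H then 1 else 0) *
             (if r \<in> supp_mats H then c ^ card {(i, j) \<in> R. r i j \<noteq> 0} else 0)))"
  proof (intro sum.cong refl)
    fix l r :: "'a mat" assume "l \<in> supp_mats L" "r \<in> supp_mats R"
    then show "c ^ card {(i, j) \<in> R. r i j \<noteq> 0} *
        (if madd (madd (madd l e) f) r \<in> supp_mats H then 1 else 0) =
      (if e \<in> supp_mats H \<and> f \<in> supp_mats H then 1 else 0) *
      ((if l \<in> supp_mats H then 1 else 0) *
       (if r \<in> supp_mats H then c ^ card {(i, j) \<in> R. r i j \<noteq> 0} else 0))"
      by (simp add: split)
  qed
  also have "\<dots> = (if e \<in> supp_mats H \<and> f \<in> supp_mats H then 1 else 0) *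
      ((\<Sum>l\<in>?SL. if l \<in> supp_mats H then 1 else 0) *
       (\<Sum>r\<in>?SR. if r \<in> supp_mats H then c ^ card {(i, j) \<in> R. r i j \<noteq> 0} else 0))"
    unfolding sum_product by (simp only: sum_distrib_left)
  also have "(\<Sum>l\<in>?SL. if l \<in> supp_mats H then 1 else 0) =
      (of_nat (card (supp_mats (L \<inter> H) :: 'a mat set)) :: 'c)"
    using sum_supp_mats_Int[OF \<open>finite L\<close>, of H "\<lambda>_. 1 :: 'c"] by simp
  also have "\<dots> = of_nat (card (UNIV :: 'a set)) ^ card (L \<inter> H)"
    using \<open>finite L\<close> by (simp add: card_supp_mats)
  also have "(\<Sum>r\<in>?SR. if r \<in> supp_mats H then c ^ card {(i, j) \<in> R. r i j \<noteq> 0} else 0) =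
      (\<Sum>r\<in>(supp_mats (R \<inter> H) :: 'a mat set). c ^ card {(i, j) \<in> R. r i j \<noteq> 0})"
    by (rule sum_supp_mats_Int[OF \<open>finite R\<close>])
  also have "\<dots> =
      (\<Sum>r\<in>(supp_mats (R \<inter> H) :: 'a mat set). c ^ card {(i, j) \<in> R \<inter> H. r i j \<noteq> 0})"
    using count_eq by (auto intro!: sum.cong)
  also have "\<dots> = (1 + of_nat (card (UNIV :: 'a set) - 1) * c) ^ card (R \<inter> H)"
    using \<open>finite R\<close> by (intro sum_supp_mats_power_card_nonzero) simp
  finally show ?thesis by simp
qed

definition U_dual_pos :: "nat \<Rightarrow> nat set \<Rightarrow> (nat \<times> nat) set" where
  "U_dual_pos N A = {(i, j). i \<in> {1..N} - A \<and> i < j \<and> j \<le> cA N A i}"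

definition U_pos :: "nat \<Rightarrow> nat set \<Rightarrow> (nat \<times> nat) set" where
  "U_pos N A = {(i, j). i \<in> A \<and> i < j \<and> cA N A i < j \<and> j \<le> N}"

definition pullback_mat ::
    "(nat \<times> nat) set \<Rightarrow> (nat \<times> nat \<Rightarrow> nat \<times> nat) \<Rightarrow> ('a::zero) mat \<Rightarrow> 'a mat" where
  "pullback_mat D \<phi> u = (\<lambda>i j. if (i, j) \<in> D then case_prod u (\<phi> (i, j)) else 0)"

definition dual_coords :: "nat set \<Rightarrow> nat \<times> nat \<Rightarrow> nat \<times> nat" where
  "dual_coords A = (\<lambda>(i, j). (i - rank A i, j - rank A i))"

definition A_coords :: "nat \<Rightarrow> nat set \<Rightarrow> nat \<times> nat \<Rightarrow> nat \<times> nat" where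
  "A_coords N A = (\<lambda>(i, j). (i - rank ({1..N} - A) i, j - (N - card A)))"

lemma embed_dual_eq_pullback_mat: "embed_dual N A u' = pullback_mat (U_dual_pos N A) (dual_coords A) u'"
  by (auto simp: embed_dual_def pullback_mat_def U_dual_pos_def dual_coords_def rank_def fun_eq_iff)

lemma embed_A_eq_pullback_mat: "embed_A N A u = pullback_mat (U_pos N A) (A_coords N A) u"
  by (auto simp: embed_A_def pullback_mat_def U_pos_def A_coords_def rank_def fun_eq_iff)

lemma pullback_mat_in_supp_mats: "pullback_mat D \<phi> u \<in> supp_mats D"
  by (simp add: pullback_mat_def supp_mats_def)

lemma embed_dual_in_supp_mats: "embed_dual N A u' \<in> supp_mats (U_dual_pos N A)"
  unfolding embed_dual_eq_pullback_mat by (rule pullback_mat_in_supp_mats)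

lemma embed_A_in_supp_mats: "embed_A N A u \<in> supp_mats (U_pos N A)"
  unfolding embed_A_eq_pullback_mat by (rule pullback_mat_in_supp_mats)

lemma pullback_mat_in_supp_mats_iff:
  assumes bij: "bij_betw \<phi> D P" and u: "u \<in> supp_mats P"
    and corr: "\<And>p. p \<in> D \<Longrightarrow> p \<in> H \<longleftrightarrow> \<phi> p \<in> Q"
  shows "pullback_mat D \<phi> u \<in> supp_mats H \<longleftrightarrow> u \<in> supp_mats Q"
proof
  assume pb: "pullback_mat D \<phi> u \<in> supp_mats H"
  show "u \<in> supp_mats Q" unfolding supp_mats_def
  proof (intro CollectI allI impI)
    fix k l assume nz: "u k l \<noteq> 0"
    then have "(k, l) \<in> P" using u by (auto simp: supp_mats_def)
    then obtain p where p: "p \<in> D" "\<phi> p = (k, l)"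
      using bij by (metis bij_betw_iff_bijections)
    with nz pb have "p \<in> H"
      by (cases p) (auto simp: pullback_mat_def supp_mats_def)
    with corr p show "(k, l) \<in> Q" by simp
  qed
next
  assume uQ: "u \<in> supp_mats Q"
  show "pullback_mat D \<phi> u \<in> supp_mats H" unfolding supp_mats_def
  proof (intro CollectI allI impI)
    fix i j assume "pullback_mat D \<phi> u i j \<noteq> 0"
    then have ij: "(i, j) \<in> D" "case_prod u (\<phi> (i, j)) \<noteq> 0"
      by (auto simp: pullback_mat_def split: if_splits)
    then have "\<phi> (i, j) \<in> Q"
      using uQ by (cases "\<phi> (i, j)") (auto simp: supp_mats_def)
    with corr ij(1) show "(i, j) \<in> H" by blast
  qed
qed

lemma card_Int_eq_card_bij_betw:
  assumes bij: "bij_betw \<phi> D P" and "Q \<subseteq> P"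
    and corr: "\<And>p. p \<in> D \<Longrightarrow> p \<in> H \<longleftrightarrow> \<phi> p \<in> Q"
  shows "card (D \<inter> H) = card Q"
proof -
  have "\<phi> ` (D \<inter> H) = Q"
    using assms by (auto simp: bij_betw_def image_iff)
  moreover have "inj_on \<phi> (D \<inter> H)"
    using bij by (auto simp: bij_betw_def intro: inj_on_subset)
  ultimately show ?thesis by (metis card_image)
qed

context
  fixes n :: nat and A :: "nat set"
  assumes A: "A \<subseteq> {1..n}"
begin

lemma finite_A: "finite A"
  using A finite_subset by blast

lemma card_A_le: "card A \<le> n"
  using card_mono[OF finite_atLeastAtMost A] by simp

lemma card_compl: "card ({1..n} - A) = n - card A"
  using A by (simp add: card_Diff_subset finite_subset)

lemma rank_add_rank_compl:
  assumes "i \<in> {1..n}"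
  shows "rank A i + rank ({1..n} - A) i + 1 = i"
proof -
  have "{1..<i} = {a \<in> A. a < i} \<union> {b \<in> {1..n} - A. b < i}"
    using A assms by auto
  then have "card {1..<i} = rank A i + rank ({1..n} - A) i"
    using finite_A by (simp add: rank_def card_Un_disjoint disjoint_iff)
  moreover have "1 \<le> i" using assms by simp
  ultimately show ?thesis by simp
qed

lemma cA_eq_rank: "cA n A i = (n - card A) + rank A (Suc i)"
proof -
  have "card A = card ({a \<in> A. a < Suc i} \<union> {a \<in> A. a > i})"
    by (rule arg_cong[where f = card]) auto
  also have "\<dots> = rank A (Suc i) + card {a \<in> A. a > i}"
    unfolding rank_def by (rule card_Un_disjoint) (use finite_A in auto)
  finally show ?thesis
    using card_A_le by (simp add: cA_def)
qed

lemma row_compl: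
  assumes i: "i \<in> {1..n} - A"
  shows "rank A i + rank ({1..n} - A) i + 1 = i"
    and "cA n A i = (n - card A) + rank A i"
    and "rank ({1..n} - A) i < n - card A"
    and "sorted_list_of_set ({1..n} - A) ! rank ({1..n} - A) i = i"
proof -
  have fin: "finite ({1..n} - A)" by simp
  show "rank A i + rank ({1..n} - A) i + 1 = i"
    using i by (intro rank_add_rank_compl) auto
  show "cA n A i = (n - card A) + rank A i"
    using i cA_eq_rank[of i] rank_Suc[OF finite_A, of i] by simp
  show "rank ({1..n} - A) i < n - card A"
    using rank_less_card[OF fin i] card_compl by simp
  show "sorted_list_of_set ({1..n} - A) ! rank ({1..n} - A) i = i"
    by (rule sorted_list_of_set_nth_rank[OF fin i])
qed

lemma row_mem:
  assumes i: "i \<in> A"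
  shows "rank A i + rank ({1..n} - A) i + 1 = i"
    and "cA n A i = (n - card A) + rank A i + 1"
    and "rank A i < card A"
    and "sorted_list_of_set A ! rank A i = i"
    and "rank ({1..n} - A) i \<le> n - card A"
proof -
  show "rank A i + rank ({1..n} - A) i + 1 = i"
    using i A by (intro rank_add_rank_compl) auto
  show "cA n A i = (n - card A) + rank A i + 1"
    using i cA_eq_rank[of i] rank_Suc[OF finite_A, of i] by simp
  show "rank A i < card A" "sorted_list_of_set A ! rank A i = i"
    using rank_less_card[OF finite_A i] sorted_list_of_set_nth_rank[OF finite_A i] by simp_all
  show "rank ({1..n} - A) i \<le> n - card A"
    using rank_le_card[of "{1..n} - A" i] card_compl by simp
qed

lemma ut_pos_decomp: "ut_pos n = L_pos n A \<union> U_dual_pos n A \<union> U_pos n A \<union> R_pos n A"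
proof -
  have "cA n A i \<le> n" for i by (simp add: cA_def)
  then show ?thesis
    using A by (auto simp: ut_pos_def L_pos_def U_dual_pos_def U_pos_def R_pos_def intro: le_trans)
qed

lemma blocks_disjoint:
  "L_pos n A \<inter> U_dual_pos n A = {}"
  "(L_pos n A \<union> U_dual_pos n A) \<inter> U_pos n A = {}"
  "(L_pos n A \<union> U_dual_pos n A \<union> U_pos n A) \<inter> R_pos n A = {}"
  by (auto simp: L_pos_def U_dual_pos_def U_pos_def R_pos_def)

lemma finite_blocks:
  "finite (L_pos n A)" "finite (U_dual_pos n A)" "finite (U_pos n A)" "finite (R_pos n A)"
  using ut_pos_decomp finite_ut_pos[of n] by (metis finite_Un)+

lemma card_decomp_Int:
  assumes "H \<subseteq> ut_pos n"
  shows "card H = card (L_pos n A \<inter> H) + card (U_dual_pos n A \<inter> H) + card (U_pos n A \<inter> H)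
    + card (R_pos n A \<inter> H)"
proof -
  have "H = (L_pos n A \<inter> H) \<union> (U_dual_pos n A \<inter> H) \<union> (U_pos n A \<inter> H) \<union> (R_pos n A \<inter> H)"
    using assms ut_pos_decomp by blast
  also have "card \<dots> = card (L_pos n A \<inter> H) + card (U_dual_pos n A \<inter> H) + card (U_pos n A \<inter> H)
    + card (R_pos n A \<inter> H)"
    using blocks_disjoint finite_blocks by (simp add: card_Un_disjoint Int_Un_distrib2 disjoint_iff)
  finally show ?thesis .
qed

lemma card_ut_pos_decomp:
  shows "card (ut_pos n) = card (L_pos n A) + card (U_dual_pos n A) + card (U_pos n A) + card (R_pos n A)"
proof -
  have "L_pos n A \<inter> ut_pos n = L_pos n A" "U_dual_pos n A \<inter> ut_pos n = U_dual_pos n A"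
    "U_pos n A \<inter> ut_pos n = U_pos n A" "R_pos n A \<inter> ut_pos n = R_pos n A"
    using ut_pos_decomp by blast+
  with card_decomp_Int[OF order_refl] show ?thesis by simp
qed

lemma bij_betw_dual_coords: "bij_betw (dual_coords A) (U_dual_pos n A) (ut_pos (n - card A))"
proof -
  let ?B = "{1..n} - A" and ?m = "n - card A"
  define g where "g = (\<lambda>(k, l). (sorted_list_of_set ?B ! (k - 1),
    l + rank A (sorted_list_of_set ?B ! (k - 1))))"
  note row = row_compl
  have coords: "dual_coords A (i, j) = (rank ?B i + 1, j - rank A i)" if "i \<in> ?B" for i j
    using row(1)[OF that] by (simp add: dual_coords_def)
  have g: "g (k, l) = (i, l + rank A i)" "i \<in> ?B" "rank ?B i + 1 = k"
    if "1 \<le> k" "k \<le> ?m" "i = sorted_list_of_set ?B ! (k - 1)" for i k l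
  proof -
    have fin: "finite ?B" and lt: "k - 1 < card ?B" using that card_compl by simp_all
    show "i \<in> ?B" unfolding that(3) by (rule sorted_list_of_set_nth_mem[OF fin lt])
    show "rank ?B i + 1 = k" unfolding that(3) using rank_sorted_list_of_set_nth[OF fin lt] that(1) by simp
  qed (simp add: g_def that)
  show ?thesis
  proof (rule bij_betwI[where g = g])
    show "dual_coords A \<in> U_dual_pos n A \<rightarrow> ut_pos ?m"
    proof
      fix p assume "p \<in> U_dual_pos n A"
      then obtain i j where p: "p = (i, j)" "i \<in> ?B" "i < j" "j \<le> cA n A i"
        by (auto simp: U_dual_pos_def)
      with row[OF p(2)] show "dual_coords A p \<in> ut_pos ?m"
        unfolding ut_pos_def p(1) coords[OF p(2)] by simp linarith
    qed
    show "g \<in> ut_pos ?m \<rightarrow> U_dual_pos n A"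
    proof
      fix q assume "q \<in> ut_pos ?m"
      then obtain k l where q: "q = (k, l)" "1 \<le> k" "k < l" "l \<le> ?m"
        by (auto simp: ut_pos_def)
      define i where "i = sorted_list_of_set ?B ! (k - 1)"
      have "k \<le> ?m" using q by simp
      note i = g[OF q(2) this i_def]
      with q row[OF i(2)] show "g q \<in> U_dual_pos n A"
        unfolding U_dual_pos_def by simp
    qed
    show "g (dual_coords A p) = p" if "p \<in> U_dual_pos n A" for p
    proof -
      obtain i j where p: "p = (i, j)" "i \<in> ?B" "i < j"
        using \<open>p \<in> U_dual_pos n A\<close> by (auto simp: U_dual_pos_def)
      with row[OF p(2)] show ?thesis
        by (simp add: g_def coords)
    qed
    show "dual_coords A (g q) = q" if "q \<in> ut_pos ?m" for q
    proof -
      obtain k l where q: "q = (k, l)" "1 \<le> k" "k < l" "l \<le> ?m"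
        using \<open>q \<in> ut_pos ?m\<close> by (auto simp: ut_pos_def)
      define i where "i = sorted_list_of_set ?B ! (k - 1)"
      have "k \<le> ?m" using q by simp
      note i = g[OF q(2) this i_def]
      with q show ?thesis
        by (simp add: coords)
    qed
  qed
qed


lemma bij_betw_A_coords: "bij_betw (A_coords n A) (U_pos n A) (ut_pos (card A))"
proof -
  let ?B = "{1..n} - A" and ?m = "n - card A"
  define g where "g = (\<lambda>(k, l). (sorted_list_of_set A ! (k - 1), l + ?m))"
  note row = row_mem
  have coords: "A_coords n A (i, j) = (rank A i + 1, j - ?m)" if "i \<in> A" for i j
    using row(1)[OF that] by (simp add: A_coords_def)
  have g: "g (k, l) = (i, l + ?m)" "i \<in> A" "rank A i + 1 = k"
    if "1 \<le> k" "k \<le> card A" "i = sorted_list_of_set A ! (k - 1)" for i k l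
  proof -
    have fin: "finite A" and lt: "k - 1 < card A" using that finite_A by simp_all
    show "i \<in> A" unfolding that(3) by (rule sorted_list_of_set_nth_mem[OF fin lt])
    show "rank A i + 1 = k" unfolding that(3) using rank_sorted_list_of_set_nth[OF fin lt] that(1) by simp
  qed (simp add: g_def that)
  show ?thesis
  proof (rule bij_betwI[where g = g])
    show "A_coords n A \<in> U_pos n A \<rightarrow> ut_pos (card A)"
    proof
      fix p assume "p \<in> U_pos n A"
      then obtain i j where p: "p = (i, j)" "i \<in> A" "cA n A i < j" "j \<le> n"
        by (auto simp: U_pos_def)
      with row[OF p(2)] card_A_le show "A_coords n A p \<in> ut_pos (card A)"
        unfolding ut_pos_def p(1) coords[OF p(2)] by simp linarith
    qed
    show "g \<in> ut_pos (card A) \<rightarrow> U_pos n A"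
    proof
      fix q assume "q \<in> ut_pos (card A)"
      then obtain k l where q: "q = (k, l)" "1 \<le> k" "k < l" "l \<le> card A"
        by (auto simp: ut_pos_def)
      define i where "i = sorted_list_of_set A ! (k - 1)"
      have "k \<le> card A" using q by simp
      note i = g[OF q(2) this i_def]
      with q row[OF i(2)] card_A_le show "g q \<in> U_pos n A"
        unfolding U_pos_def by simp linarith
    qed
    show "g (A_coords n A p) = p" if "p \<in> U_pos n A" for p
    proof -
      obtain i j where p: "p = (i, j)" "i \<in> A" "cA n A i < j"
        using \<open>p \<in> U_pos n A\<close> by (auto simp: U_pos_def)
      with row[OF p(2)] show ?thesis
        by (simp add: g_def coords)
    qed
    show "A_coords n A (g q) = q" if "q \<in> ut_pos (card A)" for q
    proof -
      obtain k l where q: "q = (k, l)" "1 \<le> k" "k < l" "l \<le> card A"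
        using \<open>q \<in> ut_pos (card A)\<close> by (auto simp: ut_pos_def)
      define i where "i = sorted_list_of_set A ! (k - 1)"
      have "k \<le> card A" using q by simp
      note i = g[OF q(2) this i_def]
      with q show ?thesis
        by (simp add: coords)
    qed
  qed
qed

end

lemma le_diff_min_iff:
  fixes d e f t :: nat
  assumes "t \<le> e + f" "0 < d"
  shows "d \<le> f - min (e + f - t) f \<longleftrightarrow> d + e \<le> t"
proof (cases "e \<le> t")
  case True
  then have "min (e + f - t) f = e + f - t" by simp
  with assms True show ?thesis by simp arith
next
  case False
  then have "min (e + f - t) f = f" by simp
  with assms False show ?thesis by simp
qed

context
  fixes n :: nat and A :: "nat set" and w :: "nat \<Rightarrow> nat"
  assumes A: "A \<subseteq> {1..n}" and w: "w permutes {1..n}"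
begin

lemma R_pos_Int_ut_perm_pos_eq_empty_iff:
  "R_pos n A \<inter> ut_perm_pos n w = {} \<longleftrightarrow>
   is_inv_table (n - card A) (restrict_seq (inv_tab n w) ({1..n} - A))"
proof -
  let ?B = "{1..n} - A" and ?m = "n - card A"
  have row: "rank A i + rank ?B i + 1 = i" "cA n A i = ?m + rank A i" "rank ?B i < ?m"
    "inv_tab n w i \<le> n - i"
    if "i \<in> ?B" for i
    using row_compl[OF A that] inv_tab_le[OF w] by simp_all
  have "is_inv_table ?m (restrict_seq (inv_tab n w) ?B) \<longleftrightarrow>
      (\<forall>i\<in>?B. inv_tab n w i + rank ?B i < ?m)"
    using is_inv_table_restrict_seq_iff[of ?B] card_compl[OF A] by simp
  also have "\<dots> \<longleftrightarrow> R_pos n A \<inter> ut_perm_pos n w = {}"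
  proof
    assume bound: "\<forall>i\<in>?B. inv_tab n w i + rank ?B i < ?m"
    show "R_pos n A \<inter> ut_perm_pos n w = {}"
    proof (rule ccontr)
      assume "R_pos n A \<inter> ut_perm_pos n w \<noteq> {}"
      then obtain i j where i: "i \<in> ?B" "cA n A i < j" "j - i \<le> inv_tab n w i" "i < j"
        by (auto simp: R_pos_def ut_perm_pos_def ut_pos_def)
      moreover have "inv_tab n w i + rank ?B i < ?m" using bound i(1) by blast
      ultimately show False using row[OF i(1)] by linarith
    qed
  next
    assume empty: "R_pos n A \<inter> ut_perm_pos n w = {}"
    show "\<forall>i\<in>?B. inv_tab n w i + rank ?B i < ?m"
    proof (rule ballI, rule ccontr)
      fix i assume i: "i \<in> ?B" and "\<not> inv_tab n w i + rank ?B i < ?m"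
      then have "(i, i + inv_tab n w i) \<in> R_pos n A \<inter> ut_perm_pos n w"
        using row[OF i] by (auto simp: R_pos_def ut_perm_pos_def ut_pos_def)
      with empty show False by blast
    qed
  qed
  finally show ?thesis by simp
qed

lemma ut_perm_pos_dual_coords_iff:
  assumes tab: "is_inv_table (n - card A) (restrict_seq (inv_tab n w) ({1..n} - A))"
    and p: "p \<in> U_dual_pos n A"
  shows "p \<in> ut_perm_pos n w \<longleftrightarrow> dual_coords A p \<in>
    ut_perm_pos (n - card A) (perm_of_inv_table (n - card A) (restrict_seq (inv_tab n w) ({1..n} - A)))"
proof -
  let ?B = "{1..n} - A" and ?m = "n - card A"
  let ?y = "perm_of_inv_table ?m (restrict_seq (inv_tab n w) ?B)"
  obtain i j where p: "p = (i, j)" "i \<in> ?B" "i < j" "j \<le> cA n A i"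
    using p by (auto simp: U_dual_pos_def)
  have row: "rank A i + rank ?B i + 1 = i" "cA n A i = ?m + rank A i" "rank ?B i < ?m"
    "sorted_list_of_set ?B ! rank ?B i = i" "rank A i \<le> card A"
    using row_compl[OF A p(2)] rank_le_card[OF finite_A[OF A]] by simp_all
  have tab_y: "inv_tab ?m ?y (rank ?B i + 1) = inv_tab n w i"
    using perm_of_inv_table(2)[OF tab, of "rank ?B i + 1"] row by (simp add: restrict_seq_def)
  have "dual_coords A p = (rank ?B i + 1, j - rank A i)"
    using p(1) row(1) by (simp add: dual_coords_def)
  moreover have "rank ?B i + 1 < j - rank A i" "j - rank A i \<le> ?m"
    "j - rank A i - (rank ?B i + 1) = j - i" "j \<le> n"
    using p row card_A_le[OF A] by linarith+
  ultimately show ?thesis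
    using p tab_y by (simp add: ut_perm_pos_def ut_pos_def)
qed

lemma ut_perm_pos_A_coords_iff:
  assumes p: "p \<in> U_pos n A"
  shows "p \<in> ut_perm_pos n w \<longleftrightarrow> A_coords n A p \<in>
    ut_perm_pos (card A) (perm_of_dual_inv_table (card A)
      (\<lambda>j. min (dual_inv_tab n w (sorted_list_of_set A ! (j - 1))) (card A - j)))"
proof -
  let ?B = "{1..n} - A" and ?m = "n - card A"
  let ?c = "\<lambda>j. min (dual_inv_tab n w (sorted_list_of_set A ! (j - 1))) (card A - j)"
  let ?u = "perm_of_dual_inv_table (card A) ?c"
  obtain i j where p: "p = (i, j)" "i \<in> A" "cA n A i < j" "j \<le> n"
    using p by (auto simp: U_pos_def)
  have "i \<in> {1..n}" using A p(2) by blast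
  have row: "rank A i + rank ?B i + 1 = i" "cA n A i = ?m + rank A i + 1" "rank A i < card A"
    "sorted_list_of_set A ! rank A i = i" "rank ?B i \<le> ?m" "inv_tab n w i \<le> n - i"
    using row_mem[OF A p(2)] inv_tab_le[OF w] by simp_all
  define s where "s = rank A i"
  define d where "d = j - ?m - (s + 1)"
  define e where "e = ?m - rank ?B i"
  define f where "f = card A - (s + 1)"
  have tab_u: "inv_tab (card A) ?u (s + 1) = f - min (e + f - inv_tab n w i) f"
  proof -
    have "inv_tab (card A) ?u (s + 1) = card A - (s + 1) - min (n - i - inv_tab n w i) (card A - (s + 1))"
      using perm_of_dual_inv_table(2)[of "card A" ?c "s + 1"] row
      by (simp add: dual_inv_tab_def s_def)
    moreover have "n - i = e + f"
      using row card_A_le[OF A] unfolding e_def f_def s_def by linarith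
    ultimately show ?thesis by (simp add: f_def)
  qed
  have "A_coords n A p = (s + 1, j - ?m)"
    using p(1) row(1) by (simp add: A_coords_def s_def)
  moreover have "s + 1 < j - ?m" "j - ?m \<le> card A" "j - ?m - (s + 1) = d"
    "0 < d" "j - i = d + e" "inv_tab n w i \<le> e + f" "i < j"
    using p row card_A_le[OF A] unfolding d_def e_def f_def s_def by linarith+
  ultimately show ?thesis
    using p tab_u le_diff_min_iff[of "inv_tab n w i" e f d] \<open>i \<in> {1..n}\<close>
    by (simp add: ut_perm_pos_def ut_pos_def)
qed


lemma embed_dual_in_ut_perm_pos_iff:
  assumes tab: "is_inv_table (n - card A) (restrict_seq (inv_tab n w) ({1..n} - A))"
    and u': "u' \<in> ut (n - card A)"
  shows "embed_dual n A u' \<in> supp_mats (ut_perm_pos n w) \<longleftrightarrow> u' \<in> supp_mats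
    (ut_perm_pos (n - card A) (perm_of_inv_table (n - card A) (restrict_seq (inv_tab n w) ({1..n} - A))))"
  unfolding embed_dual_eq_pullback_mat
  using bij_betw_dual_coords[OF A] u' ut_perm_pos_dual_coords_iff[OF tab]
  by (simp add: pullback_mat_in_supp_mats_iff ut_eq_supp_mats)

lemma embed_A_in_ut_perm_pos_iff:
  assumes u: "u \<in> ut (card A)"
  shows "embed_A n A u \<in> supp_mats (ut_perm_pos n w) \<longleftrightarrow> u \<in> supp_mats
    (ut_perm_pos (card A) (perm_of_dual_inv_table (card A)
      (\<lambda>j. min (dual_inv_tab n w (sorted_list_of_set A ! (j - 1))) (card A - j))))"
  unfolding embed_A_eq_pullback_mat
  using bij_betw_A_coords[OF A] u ut_perm_pos_A_coords_iff
  by (simp add: pullback_mat_in_supp_mats_iff ut_eq_supp_mats)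

lemma card_ut_perm_pos_blocks:
  assumes tab: "is_inv_table (n - card A) (restrict_seq (inv_tab n w) ({1..n} - A))"
  defines "y \<equiv> perm_of_inv_table (n - card A) (restrict_seq (inv_tab n w) ({1..n} - A))"
    and "v \<equiv> perm_of_dual_inv_table (card A)
      (\<lambda>j. min (dual_inv_tab n w (sorted_list_of_set A ! (j - 1))) (card A - j))"
  shows "card (ut_pos n) + card (L_pos n A \<inter> ut_perm_pos n w)
      + card (ut_perm_pos (n - card A) y) + card (ut_perm_pos (card A) v) =
    card (ut_perm_pos n w) + (card (L_pos n A) + card (R_pos n A))
      + card (ut_pos (n - card A)) + card (ut_pos (card A))"
proof -
  have "card (U_dual_pos n A \<inter> ut_perm_pos n w) = card (ut_perm_pos (n - card A) y)"
    unfolding y_def by (rule card_Int_eq_card_bij_betw[OF bij_betw_dual_coords[OF A]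
      ut_perm_pos_subset ut_perm_pos_dual_coords_iff[OF tab]])
  moreover have "card (U_pos n A \<inter> ut_perm_pos n w) = card (ut_perm_pos (card A) v)"
    unfolding v_def by (rule card_Int_eq_card_bij_betw[OF bij_betw_A_coords[OF A]
      ut_perm_pos_subset ut_perm_pos_A_coords_iff])
  moreover have "card (U_dual_pos n A) = card (ut_pos (n - card A))"
    "card (U_pos n A) = card (ut_pos (card A))"
    using bij_betw_same_card[OF bij_betw_dual_coords[OF A]]
      bij_betw_same_card[OF bij_betw_A_coords[OF A]] by simp_all
  moreover have "R_pos n A \<inter> ut_perm_pos n w = {}"
    using tab R_pos_Int_ut_perm_pos_eq_empty_iff by simp
  ultimately show ?thesis
    using card_ut_pos_decomp[OF A] card_decomp_Int[OF A ut_perm_pos_subset[of n w]] by simp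
qed

end

lemma card_UNIV_field_ge_2: "2 \<le> card (UNIV :: ('a::{finite,field}) set)"
proof -
  have "card {0 :: 'a, 1} \<le> card (UNIV :: 'a set)" by (rule card_mono) auto
  then show ?thesis by simp
qed

lemma Dela_indicator:
  fixes \<gamma> :: "('a::{finite,field}) mat \<Rightarrow> complex"
  assumes A: "A \<subseteq> {1..n}" and \<gamma>: "\<And>x. \<gamma> x = (if x \<in> supp_mats H then K else 0)"
  shows "Dela n A \<gamma> (u', u) =
    (if embed_dual n A u' \<in> supp_mats H \<and> embed_A n A u \<in> supp_mats H \<and> R_pos n A \<inter> H = {}
     then K * of_nat (card (UNIV :: 'a set)) ^ card (L_pos n A \<inter> H) /
          of_nat (card (UNIV :: 'a set)) ^ (card (L_pos n A) + card (R_pos n A))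
     else 0)"
proof -
  let ?q = "of_nat (card (UNIV :: 'a set)) :: complex"
  let ?c = "- 1 / (?q - 1)"
  let ?e = "embed_dual n A u'" and ?f = "embed_A n A u"
  let ?ind = "\<lambda>x. if x \<in> supp_mats H then 1 else 0 :: complex"
  have q: "2 \<le> card (UNIV :: 'a set)" by (rule card_UNIV_field_ge_2)
  then have "?q - 1 \<noteq> 0" by simp
  with q have cancel: "1 + of_nat (card (UNIV :: 'a set) - 1) * ?c = 0"
    by (simp add: of_nat_diff field_simps)
  have "(\<Sum>l\<in>supp_mats (L_pos n A). \<Sum>r\<in>supp_mats (R_pos n A).
      ?c ^ card {(i, j) \<in> R_pos n A. r i j \<noteq> 0} * \<gamma> (madd (madd (madd l ?e) ?f) r)) =
    K * (\<Sum>l\<in>supp_mats (L_pos n A). \<Sum>r\<in>supp_mats (R_pos n A).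
      ?c ^ card {(i, j) \<in> R_pos n A. r i j \<noteq> 0} * ?ind (madd (madd (madd l ?e) ?f) r))"
    unfolding sum_distrib_left by (intro sum.cong refl) (simp add: \<gamma> ac_simps)
  also have "\<dots> = K * (if ?e \<in> supp_mats H \<and> ?f \<in> supp_mats H
      then ?q ^ card (L_pos n A \<inter> H) * 0 ^ card (R_pos n A \<inter> H) else 0)"
    using sum_sum_indicator_madd[OF finite_blocks(1,4)[OF A] embed_dual_in_supp_mats[of n A u']
        embed_A_in_supp_mats[of n A u] blocks_disjoint[OF A], where H = H and c = ?c]
    unfolding cancel by (rule arg_cong[where f = "\<lambda>x. K * x"])
  also have "(0::complex) ^ card (R_pos n A \<inter> H) = (if R_pos n A \<inter> H = {} then 1 else 0)"
    using finite_blocks(4)[OF A] by (simp add: card_gt_0_iff)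
  finally show ?thesis
    by (simp add: Dela_def power_one_over)
qed

lemma Dela_barchi:
  fixes u' u :: "('a::{finite,field}) mat"
  assumes w: "w permutes {1..n}" and A: "A \<subseteq> {1..n}"
    and u': "u' \<in> ut (n - card A)" and u: "u \<in> ut (card A)"
  defines "y \<equiv> perm_of_inv_table (n - card A) (restrict_seq (inv_tab n w) ({1..n} - A))"
    and "v \<equiv> perm_of_dual_inv_table (card A)
      (\<lambda>j. min (dual_inv_tab n w (sorted_list_of_set A ! (j - 1))) (card A - j))"
  shows "Dela n A (barchi n w) (u', u) =
    (if is_inv_table (n - card A) (restrict_seq (inv_tab n w) ({1..n} - A))
     then barchi (n - card A) y u' * barchi (card A) v u else 0)"
proof -
  let ?q = "of_nat (card (UNIV :: 'a set)) :: complex"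
  let ?H = "ut_perm_pos n w" and ?m = "n - card A" and ?L = "L_pos n A" and ?R = "R_pos n A"
  have Dela: "Dela n A (barchi n w) (u', u) =
    (if embed_dual n A u' \<in> supp_mats ?H \<and> embed_A n A u \<in> supp_mats ?H \<and> ?R \<inter> ?H = {}
     then ?q ^ card (ut_pos n) / ?q ^ card ?H * ?q ^ card (?L \<inter> ?H) / ?q ^ (card ?L + card ?R)
     else 0)"
    by (rule Dela_indicator[OF A barchi_eq])
  show ?thesis
  proof (cases "is_inv_table ?m (restrict_seq (inv_tab n w) ({1..n} - A))")
    case False
    then show ?thesis
      using Dela R_pos_Int_ut_perm_pos_eq_empty_iff[OF A w] by simp
  next
    case tab: True
    have "?q ^ card (ut_pos n) / ?q ^ card ?H * ?q ^ card (?L \<inter> ?H) / ?q ^ (card ?L + card ?R) =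
        ?q ^ card (ut_pos ?m) / ?q ^ card (ut_perm_pos ?m y) *
        (?q ^ card (ut_pos (card A)) / ?q ^ card (ut_perm_pos (card A) v))"
      using card_ut_perm_pos_blocks[OF A w tab] card_UNIV_field_ge_2[where 'a = 'a]
      by (simp add: y_def v_def field_simps flip: power_add)
    then show ?thesis
      using Dela tab R_pos_Int_ut_perm_pos_eq_empty_iff[OF A w]
        embed_dual_in_ut_perm_pos_iff[OF A w tab u'] embed_A_in_ut_perm_pos_iff[OF A w u]
      by (simp add: barchi_eq y_def v_def)
  qed
qed

theorem theorem5p5:
  fixes w :: "nat \<Rightarrow> nat" and n :: nat
  assumes "w permutes {1..n}"
  shows "\<forall>k \<le> n. \<forall>u' \<in> (ut (n - k) :: ('a::{finite,field}) mat set). \<forall>u \<in> (ut k :: 'a mat set).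
    coproduct n (barchi n w) k (u', u) =
    (\<Sum>A \<in> {A. A \<subseteq> {1..n} \<and> card A = k \<and>
               is_inv_table (n - k) (restrict_seq (inv_tab n w) ({1..n} - A))}.
       barchi (n - k) (perm_of_inv_table (n - k) (restrict_seq (inv_tab n w) ({1..n} - A))) u'
       * barchi k (perm_of_dual_inv_table k
            (\<lambda>j. min (dual_inv_tab n w (sorted_list_of_set A ! (j - 1))) (k - j))) u)"
proof (intro allI impI ballI)
  fix k u' u
  assume u': "u' \<in> (ut (n - k) :: 'a mat set)" and u: "u \<in> (ut k :: 'a mat set)"
  let ?tab = "\<lambda>A. is_inv_table (n - k) (restrict_seq (inv_tab n w) ({1..n} - A))"
  let ?term = "\<lambda>A. barchi (n - k) (perm_of_inv_table (n - k) (restrict_seq (inv_tab n w) ({1..n} - A))) u'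
       * barchi k (perm_of_dual_inv_table k
            (\<lambda>j. min (dual_inv_tab n w (sorted_list_of_set A ! (j - 1))) (k - j))) u"
  let ?S = "{A. A \<subseteq> {1..n} \<and> card A = k}"
  have "coproduct n (barchi n w) k (u', u) = (\<Sum>A\<in>?S. Dela n A (barchi n w) (u', u))"
    by (simp add: coproduct_def)
  also have "\<dots> = (\<Sum>A\<in>?S. if ?tab A then ?term A else 0)"
  proof (rule sum.cong[OF refl])
    fix A assume "A \<in> ?S"
    then show "Dela n A (barchi n w) (u', u) = (if ?tab A then ?term A else 0)"
      using Dela_barchi[OF assms, of A u' u] u' u by simp
  qed
  also have "\<dots> = (\<Sum>A\<in>{A \<in> ?S. ?tab A}. ?term A)"
    by (rule sum.inter_filter[symmetric]) simp
  also have "{A \<in> ?S. ?tab A} = {A. A \<subseteq> {1..n} \<and> card A = k \<and> ?tab A}"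
    by auto
  finally show "coproduct n (barchi n w) k (u', u) =
      (\<Sum>A \<in> {A. A \<subseteq> {1..n} \<and> card A = k \<and> ?tab A}. ?term A)" .
qed

end
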